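(* Let $K$, $\alpha$, $E$ and $\varepsilon$ be as in the context, and suppose $\delta(K,\varepsilon)(E)<1/\alpha$. Let $g,h:(0,\infty)\to\mathbb{R}$ be non-decreasing functions with $g(r)\le h(r)$ for all $r\in(0,\infty)\setminus E$. Put $\alpha(r)=1+\varepsilon(r)$. Then there exists $R\ge1$ such that $g(r)\le h(\alpha(r)r)$ for all $r\ge R$.
   Context: $K:(0,\infty)\to(0,\infty)$ is one of: (1) $K\equiv1$; (2) $K(x)=x$; (3) a strictly increasing, continuous, concave function with $1\le K(x)\le x$ for $x\ge1$ satisfying $K(2x)\le\alpha K(x)$ for all $x\ge R_0$, for some constants $\alpha\in(1,2]$, $R_0\ge1$. In case (1) take $\alpha=1$, in case (2) take $\alpha=2$ (so in all cases $K(2x)\le\alpha K(x)$ for large $x$). $E\subset[1,\infty)$ is a measurable set with $\int_E\frac{dx}{K(x)}<\infty$, and $\varepsilon:(0,\infty)\to(0,1]$ is a function. The $K$-density of $E$ relative to $\varepsilon$ is $$\delta(K,\varepsilon)(E)=\limsup_{r\to\infty}\frac{\frac{K(r)}{r}\int_{E\cap[r,\infty)}\frac{dx}{K(x)}}{\varepsilon(r)}.$$ *)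

theory Defs
  imports "HOL-Analysis.Analysis"
begin

definition admissible_K :: "(real \<Rightarrow> real) \<Rightarrow> real \<Rightarrow> bool" where
  "admissible_K K \<alpha> \<longleftrightarrow>
     ((\<forall>x>0. K x = 1) \<and> \<alpha> = 1)
   \<or> ((\<forall>x>0. K x = x) \<and> \<alpha> = 2)
   \<or> ((\<forall>x>0. K x > 0) \<and> strict_mono_on {0<..} K \<and> continuous_on {0<..} K
       \<and> concave_on {0<..} K \<and> (\<forall>x\<ge>1. 1 \<le> K x \<and> K x \<le> x)
       \<and> 1 < \<alpha> \<and> \<alpha> \<le> 2
       \<and> (\<exists>R0\<ge>1. \<forall>x\<ge>R0. K (2 * x) \<le> \<alpha> * K x))"

text \<open>The K-density of E relative to eps (an extended real, since the limsup may be infinite).\<close>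
definition K_density :: "(real \<Rightarrow> real) \<Rightarrow> (real \<Rightarrow> real) \<Rightarrow> real set \<Rightarrow> ereal" where
  "K_density K \<epsilon> E =
     Limsup at_top (\<lambda>r. ereal ((K r / r) * (LINT x:(E \<inter> {r..})|lborel. 1 / K x) / \<epsilon> r))"

end

theory Submission
  imports Defs
begin

text \<open>If \<open>g r > h((1 + \<epsilon> r) r)\<close>, monotonicity forces the whole interval
  \<open>[r, (1 + \<epsilon> r) r]\<close> into \<open>E\<close>. Since \<open>K\<close> grows at most by the factor \<open>\<alpha>\<close> on
  \<open>[r, 2r]\<close>, this interval alone contributes at least \<open>\<epsilon> r \<cdot> r / (\<alpha> K r)\<close> to
  \<open>\<integral>\<^bsub>E \<inter> [r,\<infinity>)\<^esub> dx / K x\<close>, so the quotient defining the \<open>K\<close>-density is at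
  least \<open>1/\<alpha>\<close> at \<open>r\<close>. As the density is below \<open>1/\<alpha>\<close>, this fails for all large \<open>r\<close>.\<close>

lemma admissible_K_pos:
  assumes "admissible_K K \<alpha>" "0 < x"
  shows "0 < K x"
  using assms unfolding admissible_K_def by auto

lemma admissible_K_alpha_ge_one:
  assumes "admissible_K K \<alpha>"
  shows "1 \<le> \<alpha>"
  using assms unfolding admissible_K_def by auto

lemma admissible_K_continuous:
  assumes "admissible_K K \<alpha>"
  shows "continuous_on {0<..} K"
  using assms unfolding admissible_K_def
proof (elim disjE conjE)
  assume "\<forall>x>0. K x = 1"
  then show ?thesis
    using continuous_on_cong[of "{0<..}" "{0<..}" K "\<lambda>_. 1"] by auto
next
  assume "\<forall>x>0. K x = x"
  then show ?thesis
    using continuous_on_cong[of "{0<..}" "{0<..}" K "\<lambda>x. x"] continuous_on_id by auto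
qed

lemma admissible_K_doubling:
  assumes "admissible_K K \<alpha>"
  shows "\<forall>\<^sub>F r in at_top. \<forall>x\<in>{r..2*r}. K x \<le> \<alpha> * K r"
  using assms unfolding admissible_K_def
proof (elim disjE conjE)
  assume "\<forall>x>0. K x = 1" "\<alpha> = 1"
  then show ?thesis
    unfolding eventually_at_top_linorder by (intro exI[of _ 1]) auto
next
  assume "\<forall>x>0. K x = x" "\<alpha> = 2"
  then show ?thesis
    unfolding eventually_at_top_linorder by (intro exI[of _ 1]) auto
next
  assume mono: "strict_mono_on {0<..} K" and "\<exists>R0\<ge>1. \<forall>x\<ge>R0. K (2 * x) \<le> \<alpha> * K x"
  then obtain R0 where "R0 \<ge> 1" and doubling: "\<forall>x\<ge>R0. K (2 * x) \<le> \<alpha> * K x"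
    by blast
  have "\<forall>x\<in>{r..2*r}. K x \<le> \<alpha> * K r" if "r \<ge> R0" for r
  proof
    fix x assume "x \<in> {r..2*r}"
    then have "K x \<le> K (2 * r)"
      using strict_mono_on_leD[OF mono] \<open>R0 \<ge> 1\<close> that by auto
    also have "\<dots> \<le> \<alpha> * K r"
      using doubling that by blast
    finally show "K x \<le> \<alpha> * K r" .
  qed
  then show ?thesis
    unfolding eventually_at_top_linorder by blast
qed

lemma interval_subset_exceptional_set:
  fixes g h :: "real \<Rightarrow> real"
  assumes "mono_on S g" "mono_on S h" "\<forall>r\<in>S - E. g r \<le> h r"
    and "{a..b} \<subseteq> S" "h b < g a"
  shows "{a..b} \<subseteq> E"
proof
  fix s assume s: "s \<in> {a..b}"
  show "s \<in> E"
  proof (rule ccontr)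
    assume "s \<notin> E"
    have "a \<in> S" "s \<in> S" "b \<in> S"
      using s assms(4) by auto
    then have "g a \<le> g s" "g s \<le> h s" "h s \<le> h b"
      using s \<open>s \<notin> E\<close> assms(1-3) by (auto intro: mono_onD)
    then show False
      using \<open>h b < g a\<close> by linarith
  qed
qed

lemma set_integrable_continuous_nonneg:
  fixes f :: "real \<Rightarrow> real"
  assumes "A \<in> sets lborel" "A \<subseteq> S" "open S" "continuous_on S f"
    and "\<And>x. x \<in> A \<Longrightarrow> 0 \<le> f x"
    and "(\<integral>\<^sup>+ x\<in>A. ennreal (f x) \<partial>lborel) < \<infinity>"
  shows "set_integrable lborel A f"
  unfolding set_integrable_def
proof (rule integrableI_nonneg)
  have "(\<lambda>x. indicator A x * (indicator S x *\<^sub>R f x)) \<in> borel_measurable borel"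
    using assms(1,3,4)
    by (intro borel_measurable_times borel_measurable_continuous_on_indicator) auto
  moreover have "(\<lambda>x. indicator A x * (indicator S x *\<^sub>R f x)) = (\<lambda>x. indicator A x *\<^sub>R f x)"
    using assms(2) by (auto simp: fun_eq_iff indicator_def)
  ultimately show "(\<lambda>x. indicator A x *\<^sub>R f x) \<in> borel_measurable lborel"
    by simp
  show "AE x in lborel. 0 \<le> indicator A x *\<^sub>R f x"
    using assms(5) by (simp add: indicator_def)
  have "(\<lambda>x. ennreal (indicator A x *\<^sub>R f x)) = (\<lambda>x. ennreal (f x) * indicator A x)"
    by (simp add: fun_eq_iff indicator_def)
  then show "(\<integral>\<^sup>+ x. ennreal (indicator A x *\<^sub>R f x) \<partial>lborel) < \<infinity>"
    using assms(6) by simp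
qed

lemma set_integral_ge_on_interval:
  fixes f :: "real \<Rightarrow> real"
  assumes "set_integrable lborel A f" "{a..b} \<subseteq> A" "a \<le> b"
    and "\<And>x. x \<in> A \<Longrightarrow> 0 \<le> f x" "\<And>x. x \<in> {a..b} \<Longrightarrow> c \<le> f x"
  shows "c * (b - a) \<le> (LINT x:A|lborel. f x)"
proof -
  have "c * (b - a) = (LINT x|lborel. c * indicator {a..b} x)"
    using assms(3) by simp
  also have "\<dots> \<le> (LINT x|lborel. indicator A x *\<^sub>R f x)"
    using assms
    by (intro integral_mono integrable_mult_right integrable_real_indicator)
       (auto simp: set_integrable_def indicator_def)
  finally show ?thesis
    by (simp add: set_lebesgue_integral_def)
qed

lemma density_quotient_ge_inverse_growth:
  fixes K :: "real \<Rightarrow> real"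
  assumes "0 < r" "0 < e" "0 < \<alpha>"
    and "{r..(1 + e) * r} \<subseteq> A" "set_integrable lborel A (\<lambda>x. 1 / K x)"
    and "\<And>x. x \<in> A \<Longrightarrow> 0 < K x" "\<And>x. x \<in> {r..(1 + e) * r} \<Longrightarrow> K x \<le> \<alpha> * K r"
  shows "1 / \<alpha> \<le> K r / r * (LINT x:A|lborel. 1 / K x) / e"
proof -
  have "r \<in> {r..(1 + e) * r}"
    using mult_pos_pos[OF assms(2,1)] by (simp add: algebra_simps)
  then have "0 < K r"
    using assms(4,6) by auto
  have "1 / (\<alpha> * K r) * ((1 + e) * r - r) \<le> (LINT x:A|lborel. 1 / K x)"
    using assms(1,2,4-7) \<open>0 < K r\<close>
    by (intro set_integral_ge_on_interval) (auto simp: less_imp_le frac_le subset_iff)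
  then have "e * r / (\<alpha> * K r) \<le> (LINT x:A|lborel. 1 / K x)"
    by (simp add: algebra_simps)
  then show ?thesis
    using assms(1-3) \<open>0 < K r\<close> by (simp add: field_simps)
qed

lemma set_integrable_inverse_admissible_K:
  assumes "admissible_K K \<alpha>" "E \<in> sets lborel" "E \<subseteq> {0<..}"
    and "(\<integral>\<^sup>+ x\<in>E. ennreal (1 / K x) \<partial>lborel) < \<infinity>"
  shows "set_integrable lborel E (\<lambda>x. 1 / K x)"
  using assms admissible_K_continuous[OF assms(1)] admissible_K_pos[OF assms(1)]
  by (intro set_integrable_continuous_nonneg[where S = "{0<..}"])
     (auto intro!: continuous_intros simp: less_imp_le dest: admissible_K_pos[OF assms(1)])

lemma exceptional_gap_density_quotient_ge:
  fixes g h K :: "real \<Rightarrow> real"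
  assumes "mono_on {0<..} g" "mono_on {0<..} h" "\<forall>s\<in>{0<..} - E. g s \<le> h s"
    and "E \<subseteq> {0<..}" "E \<in> sets lborel" "set_integrable lborel E (\<lambda>x. 1 / K x)"
    and "\<And>x. 0 < x \<Longrightarrow> 0 < K x"
    and "0 < r" "0 < e" "e \<le> 1" "0 < \<alpha>" "\<forall>x\<in>{r..2 * r}. K x \<le> \<alpha> * K r"
    and "h ((1 + e) * r) < g r"
  shows "1 / \<alpha> \<le> K r / r * (LINT x:(E \<inter> {r..})|lborel. 1 / K x) / e"
proof (rule density_quotient_ge_inverse_growth)
  have "(1 + e) * r \<le> 2 * r"
    using assms(8,10) by (intro mult_right_mono) auto
  then show "K x \<le> \<alpha> * K r" if "x \<in> {r..(1 + e) * r}" for x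
    using assms(12) that by auto
  have "{r..(1 + e) * r} \<subseteq> {0<..}"
    using assms(8) by auto
  then have "{r..(1 + e) * r} \<subseteq> E"
    using interval_subset_exceptional_set[OF assms(1-3)] assms(13) by blast
  then show "{r..(1 + e) * r} \<subseteq> E \<inter> {r..}"
    by auto
  show "set_integrable lborel (E \<inter> {r..}) (\<lambda>x. 1 / K x)"
    by (rule set_integrable_subset[OF assms(6)]) (use assms(5) in auto)
  show "0 < K x" if "x \<in> E \<inter> {r..}" for x
    using assms(4,7) that by auto
qed (use assms in auto)

theorem lemma1:
  fixes K \<epsilon> g h :: "real \<Rightarrow> real" and \<alpha> :: real and E :: "real set"
  assumes K: "admissible_K K \<alpha>"
    and E_meas: "E \<in> sets lborel"
    and E_sub: "E \<subseteq> {1..}"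
    and E_fin: "(\<integral>\<^sup>+ x\<in>E. ennreal (1 / K x) \<partial>lborel) < \<infinity>"
    and eps: "\<forall>r>0. 0 < \<epsilon> r \<and> \<epsilon> r \<le> 1"
    and dens: "K_density K \<epsilon> E < ereal (1 / \<alpha>)"
    and g_mono: "mono_on {0<..} g"
    and h_mono: "mono_on {0<..} h"
    and gh: "\<forall>r. 0 < r \<and> r \<notin> E \<longrightarrow> g r \<le> h r"
  shows "\<exists>R\<ge>1. \<forall>r\<ge>R. g r \<le> h ((1 + \<epsilon> r) * r)"
proof -
  have E_pos: "E \<subseteq> {0<..}"
    using E_sub by auto
  have gh_off_E: "\<forall>s\<in>{0<..} - E. g s \<le> h s"
    using gh by simp
  note gap_lemma = exceptional_gap_density_quotient_ge[OF g_mono h_mono gh_off_E E_pos E_meas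
      set_integrable_inverse_admissible_K[OF K E_meas E_pos E_fin] admissible_K_pos[OF K]]
  have "\<forall>\<^sub>F r in at_top. K r / r * (LINT x:(E \<inter> {r..})|lborel. 1 / K x) / \<epsilon> r < 1 / \<alpha>"
    using Limsup_lessD[OF dens[unfolded K_density_def]] by simp
  then have "\<forall>\<^sub>F r in at_top. g r \<le> h ((1 + \<epsilon> r) * r)"
    using admissible_K_doubling[OF K] eventually_gt_at_top[of 0]
  proof eventually_elim
    case (elim r)
    show ?case
    proof (rule ccontr)
      assume "\<not> ?case"
      then have "1 / \<alpha> \<le> K r / r * (LINT x:(E \<inter> {r..})|lborel. 1 / K x) / \<epsilon> r"
        using gap_lemma eps elim(2,3) admissible_K_alpha_ge_one[OF K] by simp
      then show False
        using elim(1) by simp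
    qed
  qed
  then obtain R where "\<forall>r\<ge>R. g r \<le> h ((1 + \<epsilon> r) * r)"
    unfolding eventually_at_top_linorder by blast
  then show ?thesis
    by (intro exI[of _ "max R 1"]) auto
qed

end
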